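(* Let $\lambda$ be a finite measure on $\mathcal M$ and $\mathcal R$ a symmetric recombination measure such that $(\mathcal R,\lambda)$ is shattering with constant $\alpha$. Then for all $k\ge1$, $$\int|\mathcal A|^{(\lambda)}_2\,d\mathcal R_k(\mathcal A)\le\frac{\alpha^*}{k+1},\qquad \alpha^*:=\lambda(\mathcal M)^2\vee 2\alpha\lambda(\mathcal M).$$
   Context: $\mathcal M$ is a complete separable metric space. $\mathcal R$ is the law of a random Borel set $R\subseteq\mathcal M$, symmetric in that $R$ and $R^c$ have the same law. $(\mathcal R,\lambda)$ is shattering with constant $\alpha>0$ if $\lambda(A)^3\le 2\alpha\int\lambda(A\cap R)\lambda(A\cap R^c)\,d\mathcal R(R)$ for all Borel $A$ (equivalently $\lambda(A)^3\le\alpha[\lambda(A)^2-2\int\lambda(A\cap R)^2\,d\mathcal R(R)]$). $\mathcal R_k$ is the law of the partition $\{R_1,R_1^c\}\wedge\cdots\wedge\{R_k,R_k^c\}$ (nonempty sets $\tilde R_1\cap\cdots\cap\tilde R_k$, $\tilde R_j\in\{R_j,R_j^c\}$) where $R_1,\dots,R_k$ are i.i.d. with law $\mathcal R$. For a finite partition $\mathcal A=\{A_1,\dots,A_N\}$, $|\mathcal A|^{(\lambda)}_r:=\sum_i\lambda(A_i)^r$. *)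

theory Defs
  imports "HOL-Probability.Probability"
begin

definition refine_partition :: "nat \<Rightarrow> (nat \<Rightarrow> 'a set) \<Rightarrow> 'a set set" where
  "refine_partition k Rs =
     {C. C \<noteq> {} \<and> (\<exists>s::nat \<Rightarrow> bool. C = (\<Inter>j\<in>{..<k}. if s j then Rs j else - Rs j))}"

definition part_norm :: "'a measure \<Rightarrow> nat \<Rightarrow> 'a set set \<Rightarrow> real" where
  "part_norm lam r \<A> = (\<Sum>A\<in>\<A>. measure lam A ^ r)"

definition shattering :: "'a set measure \<Rightarrow> 'a measure \<Rightarrow> real \<Rightarrow> bool" where
  "shattering Rm lam \<alpha> \<longleftrightarrow> \<alpha> > 0 \<and>
     (\<forall>A\<in>sets lam. measure lam A ^ 3 \<le>
        2 * \<alpha> * (\<integral>R. measure lam (A \<inter> R) * measure lam (A \<inter> - R) \<partial>Rm))"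

end

theory Submission
  imports Defs
begin

text \<open>Let \<open>F\<^sub>k = \<Sum>\<^sub>C \<lambda>(C)\<^sup>2\<close>, summed over the atoms \<open>C\<close> of \<open>\<R>\<^sub>k\<close>, and \<open>m = \<lambda>(\<M>)\<close>.
  Cutting an atom by a fresh independent \<open>R\<close> gives, by shattering,
  \<open>E[\<lambda>(C \<inter> R)\<^sup>2 + \<lambda>(C - R)\<^sup>2] = \<lambda>(C)\<^sup>2 - 2 E[\<lambda>(C \<inter> R) \<lambda>(C - R)]
    \<le> \<lambda>(C)\<^sup>2 - \<lambda>(C)\<^sup>3 / \<alpha>\<close>,
  and the Cauchy-Schwarz inequality \<open>(\<Sum> \<lambda>(C)\<^sup>2)\<^sup>2 \<le> m \<Sum> \<lambda>(C)\<^sup>3\<close> turns this into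
  \<open>E[F\<^sub>k\<^sub>+\<^sub>1 | R\<^sub>1, \<dots>, R\<^sub>k] \<le> F\<^sub>k - F\<^sub>k\<^sup>2 / (\<alpha> m)\<close>. By Jensen's inequality the means
  \<open>f\<^sub>k = E F\<^sub>k\<close> satisfy \<open>f\<^sub>k\<^sub>+\<^sub>1 \<le> f\<^sub>k - f\<^sub>k\<^sup>2 / (\<alpha> m)\<close> with \<open>f\<^sub>0 = m\<^sup>2\<close>, and a sequence
  obeying this recursion decays like \<open>max (m\<^sup>2) (2 \<alpha> m) / (k + 1)\<close>.\<close>

text \<open>The atom of \<open>\<R>\<^sub>k\<close> lying inside exactly the \<open>R\<^sub>j\<close> with \<open>j \<in> T\<close>; it may be empty.\<close>

definition cell :: "nat \<Rightarrow> nat set \<Rightarrow> (nat \<Rightarrow> 'a set) \<Rightarrow> 'a set" where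
  "cell k T Rs = (\<Inter>j\<in>{..<k}. if j \<in> T then Rs j else - Rs j)"

lemma cell_Suc_insert: "T \<subseteq> {..<k} \<Longrightarrow> cell (Suc k) (insert k T) Rs = cell k T Rs \<inter> Rs k"
  unfolding cell_def lessThan_Suc by auto

lemma cell_Suc: "T \<subseteq> {..<k} \<Longrightarrow> cell (Suc k) T Rs = cell k T Rs \<inter> - Rs k"
  unfolding cell_def lessThan_Suc by auto

lemma cell_fun_upd: "cell k T (Rs(k := R)) = cell k T Rs"
  unfolding cell_def by auto

lemma sum_cell_Suc:
  "(\<Sum>T\<in>Pow {..<Suc k}. g (cell (Suc k) T Rs)) =
   (\<Sum>T\<in>Pow {..<k}. g (cell k T Rs \<inter> Rs k) + g (cell k T Rs \<inter> - Rs k))"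
proof -
  have inj: "inj_on (insert k) (Pow {..<k})"
    by (rule inj_onI) (metis PowD lessThan_iff less_irrefl subsetD Diff_insert_absorb)
  have "(\<Sum>T\<in>Pow {..<Suc k}. g (cell (Suc k) T Rs)) =
      (\<Sum>T\<in>Pow {..<k}. g (cell (Suc k) T Rs)) +
      (\<Sum>T\<in>insert k ` Pow {..<k}. g (cell (Suc k) T Rs))"
    unfolding lessThan_Suc Pow_insert by (rule sum.union_disjoint) auto
  also have "(\<Sum>T\<in>insert k ` Pow {..<k}. g (cell (Suc k) T Rs)) =
      (\<Sum>T\<in>Pow {..<k}. g (cell k T Rs \<inter> Rs k))"
    by (simp add: sum.reindex[OF inj] cell_Suc_insert)
  also have "(\<Sum>T\<in>Pow {..<k}. g (cell (Suc k) T Rs)) =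
      (\<Sum>T\<in>Pow {..<k}. g (cell k T Rs \<inter> - Rs k))"
    by (rule sum.cong) (auto simp: cell_Suc)
  finally show ?thesis by (simp add: sum.distrib add.commute)
qed

lemma refine_partition_eq_cells:
  "refine_partition k Rs = (\<lambda>T. cell k T Rs) ` {T \<in> Pow {..<k}. cell k T Rs \<noteq> {}}"
proof (intro set_eqI iffI)
  fix C assume "C \<in> refine_partition k Rs"
  then obtain s where C: "C \<noteq> {}" "C = (\<Inter>j\<in>{..<k}. if s j then Rs j else - Rs j)"
    unfolding refine_partition_def by auto
  have "C = cell k {j\<in>{..<k}. s j} Rs"
    unfolding C(2) cell_def by (intro INF_cong) auto
  with C(1) show "C \<in> (\<lambda>T. cell k T Rs) ` {T \<in> Pow {..<k}. cell k T Rs \<noteq> {}}"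
    by auto
next
  fix C assume "C \<in> (\<lambda>T. cell k T Rs) ` {T \<in> Pow {..<k}. cell k T Rs \<noteq> {}}"
  then obtain T where "C = cell k T Rs" "C \<noteq> {}" by auto
  then show "C \<in> refine_partition k Rs"
    unfolding refine_partition_def cell_def by (intro CollectI conjI exI[of _ "\<lambda>j. j \<in> T"]) auto
qed

lemma inj_on_cell: "inj_on (\<lambda>T. cell k T Rs) {T \<in> Pow {..<k}. cell k T Rs \<noteq> {}}"
proof (rule inj_onI)
  fix T T' assume T: "T \<in> {T \<in> Pow {..<k}. cell k T Rs \<noteq> {}}"
    and T': "T' \<in> {T \<in> Pow {..<k}. cell k T Rs \<noteq> {}}"
    and eq: "cell k T Rs = cell k T' Rs"
  from T obtain x where x: "x \<in> cell k T Rs" "x \<in> cell k T' Rs" using eq by auto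
  have mem: "j \<in> S \<longleftrightarrow> x \<in> Rs j" if "j < k" "x \<in> cell k S Rs" for j S
    using that unfolding cell_def by (cases "j \<in> S") auto
  show "T = T'"
    using T T' mem[OF _ x(1)] mem[OF _ x(2)] by blast
qed

lemma part_norm_refine_partition:
  assumes "0 < r"
  shows "part_norm lam r (refine_partition k Rs) = (\<Sum>T\<in>Pow {..<k}. measure lam (cell k T Rs) ^ r)"
proof -
  have "part_norm lam r (refine_partition k Rs) =
      (\<Sum>T\<in>{T \<in> Pow {..<k}. cell k T Rs \<noteq> {}}. measure lam (cell k T Rs) ^ r)"
    unfolding part_norm_def refine_partition_eq_cells
    by (subst sum.reindex[OF inj_on_cell]) (simp add: comp_def)
  also have "\<dots> = (\<Sum>T\<in>Pow {..<k}. measure lam (cell k T Rs) ^ r)"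
    using assms by (intro sum.mono_neutral_left) auto
  finally show ?thesis .
qed

lemma sets_cell:
  assumes "space M = UNIV" "\<And>j. j < k \<Longrightarrow> Rs j \<in> sets M"
  shows "cell k T Rs \<in> sets M"
proof (cases "k = 0")
  case True
  then show ?thesis
    using sets.top[of M] assms(1) by (simp add: cell_def)
next
  case False
  have "- A \<in> sets M" if "A \<in> sets M" for A
    using sets.compl_sets[OF that] assms(1) by (simp add: Compl_eq_Diff_UNIV)
  then show ?thesis
    unfolding cell_def using False assms(2) by (intro sets.finite_INT) auto
qed

lemma (in finite_measure) measure_Int_add_Diff:
  "A \<in> sets M \<Longrightarrow> B \<in> sets M \<Longrightarrow> measure M (A \<inter> B) + measure M (A - B) = measure M A"
  using finite_measure_Union[of "A \<inter> B" "A - B"]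
  by (simp add: Int_Diff_Un Int_Diff_disjoint sets.Diff sets.Int)

lemma (in finite_measure) sum_measure_cell:
  assumes "space M = UNIV" "\<And>j. j < k \<Longrightarrow> Rs j \<in> sets M"
  shows "(\<Sum>T\<in>Pow {..<k}. measure M (cell k T Rs)) = measure M (space M)"
  using assms(2)
proof (induction k)
  case 0
  then show ?case by (simp add: cell_def assms(1))
next
  case (Suc k)
  have "(\<Sum>T\<in>Pow {..<Suc k}. measure M (cell (Suc k) T Rs)) =
      (\<Sum>T\<in>Pow {..<k}. measure M (cell k T Rs \<inter> Rs k) + measure M (cell k T Rs - Rs k))"
    by (simp add: sum_cell_Suc Diff_eq)
  also have "\<dots> = (\<Sum>T\<in>Pow {..<k}. measure M (cell k T Rs))"
    using Suc.prems by (intro sum.cong refl measure_Int_add_Diff sets_cell[OF assms(1)]) auto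
  also have "\<dots> = measure M (space M)"
    using Suc by simp
  finally show ?case .
qed

lemma sum_squares_squared_le:
  fixes a :: "'i \<Rightarrow> real"
  assumes "finite I" "\<And>i. i \<in> I \<Longrightarrow> 0 \<le> a i"
  shows "(\<Sum>i\<in>I. a i ^ 2) ^ 2 \<le> (\<Sum>i\<in>I. a i) * (\<Sum>i\<in>I. a i ^ 3)"
proof -
  have prod: "(\<Sum>i\<in>I. a i) * (\<Sum>i\<in>I. a i ^ 3) = (\<Sum>i\<in>I. \<Sum>j\<in>I. a i * a j ^ 3)"
    by (rule sum_product)
  also have "\<dots> = (\<Sum>i\<in>I. \<Sum>j\<in>I. a j * a i ^ 3)"
    by (rule sum.swap)
  finally have prod': "(\<Sum>i\<in>I. a i) * (\<Sum>i\<in>I. a i ^ 3) = (\<Sum>i\<in>I. \<Sum>j\<in>I. a j * a i ^ 3)" .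
  have square: "(\<Sum>i\<in>I. a i ^ 2) ^ 2 = (\<Sum>i\<in>I. \<Sum>j\<in>I. a i ^ 2 * a j ^ 2)"
    by (simp add: power2_eq_square[of "sum _ _"] sum_product)
  have "0 \<le> (\<Sum>i\<in>I. \<Sum>j\<in>I. a i * a j * (a i - a j) ^ 2)"
    using assms(2) by (intro sum_nonneg) auto
  also have "\<dots> = (\<Sum>i\<in>I. \<Sum>j\<in>I. a i * a j ^ 3) + (\<Sum>i\<in>I. \<Sum>j\<in>I. a j * a i ^ 3)
      - 2 * (\<Sum>i\<in>I. \<Sum>j\<in>I. a i ^ 2 * a j ^ 2)"
    by (simp add: sum.distrib sum_subtractf sum_distrib_left power2_eq_square power3_eq_cube
        algebra_simps)
  finally show ?thesis
    using prod prod' square by linarith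
qed

lemma quadratic_recursion_step:
  fixes b c x N :: real
  assumes b: "0 < b" and c: "2 * b \<le> c" and N: "1 \<le> N" and x: "0 \<le> x" "x \<le> c / N"
  shows "x - x ^ 2 / b \<le> c / (N + 1)"
proof -
  define u where "u = c / N"
  have c_eq: "c = u * N" and u: "0 \<le> u" "x \<le> u"
    using b c N x by (auto simp: u_def)
  show ?thesis
  proof (cases "b / 2 \<le> u")
    case True
    have "0 \<le> (x - b / 2) ^ 2 / b"
      using b by simp
    also have "\<dots> = b / 4 - (x - x ^ 2 / b)"
      using b by (simp add: field_simps power2_eq_square)
    finally have "x - x ^ 2 / b \<le> b / 4"
      by simp
    also have "b / 4 \<le> u * N / (N + 1)"
    proof -
      have "b * (N + 1) \<le> 2 * b * N" "2 * b * N \<le> 4 * u * N"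
        using b N True by (auto intro: mult_right_mono)
      then have "b * (N + 1) \<le> 4 * u * N"
        by linarith
      then show ?thesis
        using N by (simp add: field_simps)
    qed
    finally show ?thesis
      by (simp add: c_eq)
  next
    case False
    have "0 \<le> (u - x) * (b - u - x) / b"
      using False b u by (intro divide_nonneg_pos mult_nonneg_nonneg) auto
    also have "\<dots> = (u - u ^ 2 / b) - (x - x ^ 2 / b)"
      using b by (simp add: field_simps power2_eq_square)
    finally have "x - x ^ 2 / b \<le> u - u * (u / b)"
      by (simp add: power2_eq_square)
    also have "\<dots> \<le> u - u * (1 / (N + 1))"
    proof -
      have "b \<le> u * (N + 1)"
        using b c u by (simp add: c_eq algebra_simps)
      then have "1 / (N + 1) \<le> u / b"
        using b N by (simp add: field_simps)
      then have "u * (1 / (N + 1)) \<le> u * (u / b)"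
        using u(1) by (rule mult_left_mono)
      then show ?thesis
        by linarith
    qed
    also have "\<dots> = c / (N + 1)"
      using N by (simp add: c_eq field_simps)
    finally show ?thesis .
  qed
qed

lemma quadratic_recursion_bound:
  fixes f :: "nat \<Rightarrow> real"
  assumes "0 < b" "2 * b \<le> c" "f 0 \<le> c" "\<And>n. 0 \<le> f n" "\<And>n. f (Suc n) \<le> f n - f n ^ 2 / b"
  shows "f n \<le> c / (real n + 1)"
proof (induction n)
  case 0
  show ?case
    using assms(3) by simp
next
  case (Suc n)
  have "f n - f n ^ 2 / b \<le> c / ((real n + 1) + 1)"
    using assms Suc.IH by (intro quadratic_recursion_step) auto
  with assms(5)[of n] show ?case by (simp add: add.commute)
qed

lemma (in sigma_finite_measure) measurable_measure_section:
  assumes "Measurable.pred (N \<Otimes>\<^sub>M M) (\<lambda>p. P (fst p) (snd p))"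
  shows "(\<lambda>n. measure M {x \<in> space M. P n x}) \<in> borel_measurable N"
proof -
  define Q where "Q = {p \<in> space (N \<Otimes>\<^sub>M M). P (fst p) (snd p)}"
  have "Q \<in> sets (N \<Otimes>\<^sub>M M)"
    using assms unfolding Q_def by (simp add: Measurable.pred_def)
  then have "(\<lambda>n. emeasure M (Pair n -` Q)) \<in> borel_measurable N"
    by (rule measurable_emeasure_Pair)
  moreover have "Pair n -` Q = {x \<in> space M. P n x}" if "n \<in> space N" for n
    using that by (auto simp: Q_def space_pair_measure)
  ultimately have "(\<lambda>n. emeasure M {x \<in> space M. P n x}) \<in> borel_measurable N"
    by (simp cong: measurable_cong)
  then show ?thesis
    unfolding measure_def by (rule borel_measurable_enn2real)
qed

locale shattering_recombination =
  fixes lam :: "'a::topological_space measure" and Rm :: "'a set measure" and \<alpha> :: real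
  assumes lam_borel: "sets lam = sets borel"
    and lam_finite: "finite_measure lam"
    and Rm_prob: "prob_space Rm"
    and Rm_borel: "\<forall>S\<in>space Rm. S \<in> sets borel"
    and Rm_joint: "{(S, x). x \<in> S} \<inter> (space Rm \<times> UNIV) \<in> sets (Rm \<Otimes>\<^sub>M borel)"
    and shatter: "shattering Rm lam \<alpha>"

sublocale shattering_recombination \<subseteq> lam: finite_measure lam
  by (rule lam_finite)

sublocale shattering_recombination \<subseteq> Rm: prob_space Rm
  by (rule Rm_prob)

context shattering_recombination
begin

abbreviation mass :: real where
  "mass \<equiv> measure lam (space lam)"

abbreviation Rm_prod :: "nat \<Rightarrow> (nat \<Rightarrow> 'a set) measure" where
  "Rm_prod k \<equiv> \<Pi>\<^sub>M j\<in>{..<k}. Rm"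

lemma space_lam: "space lam = UNIV"
  using sets_eq_imp_space_eq[OF lam_borel] by simp

lemma alpha_pos: "0 < \<alpha>"
  using shatter by (simp add: shattering_def)

lemma sets_Rm: "R \<in> space Rm \<Longrightarrow> R \<in> sets lam"
  using Rm_borel lam_borel by auto

lemma measurable_measure_lam:
  assumes "Measurable.pred (N \<Otimes>\<^sub>M borel) (\<lambda>p. P (fst p) (snd p))"
  shows "(\<lambda>n. measure lam {x. P n x}) \<in> borel_measurable N"
proof -
  have "Measurable.pred (N \<Otimes>\<^sub>M lam) (\<lambda>p. P (fst p) (snd p))"
    using assms unfolding Measurable.pred_def
      measurable_cong_sets[OF sets_pair_measure_cong[OF refl lam_borel] refl] .
  then show ?thesis
    using lam.measurable_measure_section by (simp add: space_lam)
qed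

lemma pred_mem_Rm:
  assumes "f \<in> N \<rightarrow>\<^sub>M Rm"
  shows "Measurable.pred (N \<Otimes>\<^sub>M borel) (\<lambda>p. snd p \<in> f (fst p))"
proof -
  have "{p \<in> space (Rm \<Otimes>\<^sub>M borel). snd p \<in> fst p} = {(S, x). x \<in> S} \<inter> (space Rm \<times> UNIV)"
    by (auto simp: space_pair_measure)
  then have joint: "Measurable.pred (Rm \<Otimes>\<^sub>M borel) (\<lambda>p. snd p \<in> fst p)"
    using Rm_joint by (simp add: Measurable.pred_def)
  have "(\<lambda>p. (f (fst p), snd p)) \<in> N \<Otimes>\<^sub>M borel \<rightarrow>\<^sub>M Rm \<Otimes>\<^sub>M borel"
    using assms by measurable
  from measurable_compose[OF this joint] show ?thesis
    by (simp add: comp_def)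
qed

lemma borel_measurable_measure_cell:
  "(\<lambda>Rs. measure lam (cell k T Rs)) \<in> borel_measurable (Rm_prod k)"
proof -
  have cell_iff: "(\<lambda>p. snd p \<in> cell k T (fst p)) =
      (\<lambda>p. \<forall>j\<in>{..<k}. (j \<in> T \<longrightarrow> snd p \<in> fst p j) \<and> (j \<notin> T \<longrightarrow> snd p \<notin> fst p j))"
    by (auto simp: cell_def fun_eq_iff)
  have "Measurable.pred (Rm_prod k \<Otimes>\<^sub>M borel) (\<lambda>p. snd p \<in> fst p j)" if "j < k" for j
    using pred_mem_Rm[of "\<lambda>Rs. Rs j"] that by simp
  then have "Measurable.pred (Rm_prod k \<Otimes>\<^sub>M borel) (\<lambda>p. snd p \<in> cell k T (fst p))"
    unfolding cell_iff by (intro pred_intros_finite(3) pred_intros_logic) auto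
  then show ?thesis
    using measurable_measure_lam[where P = "\<lambda>Rs x. x \<in> cell k T Rs"] by simp
qed

lemma prob_space_Rm_prod: "prob_space (Rm_prod k)"
  by (intro prob_space_PiM Rm_prob)

lemma sets_Rm_prod_component:
  "Rs \<in> space (Rm_prod k) \<Longrightarrow> j < k \<Longrightarrow> Rs j \<in> sets lam"
  using sets_Rm by (auto simp: space_PiM)

lemma sets_cell_Rm_prod: "Rs \<in> space (Rm_prod k) \<Longrightarrow> cell k T Rs \<in> sets lam"
  using sets_cell[OF space_lam] sets_Rm_prod_component by blast

definition energy :: "nat \<Rightarrow> (nat \<Rightarrow> 'a set) \<Rightarrow> real" where
  "energy k Rs = (\<Sum>T\<in>Pow {..<k}. measure lam (cell k T Rs) ^ 2)"

lemma borel_measurable_energy: "energy k \<in> borel_measurable (Rm_prod k)"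
  unfolding energy_def using borel_measurable_measure_cell by measurable

lemma energy_nonneg: "0 \<le> energy k Rs"
  unfolding energy_def by (intro sum_nonneg) auto

lemma energy_le: "energy k Rs \<le> 2 ^ k * mass ^ 2"
proof -
  have "energy k Rs \<le> (\<Sum>T\<in>Pow {..<k}. mass ^ 2)"
    unfolding energy_def by (intro sum_mono power_mono lam.bounded_measure) auto
  then show ?thesis
    by (simp add: card_Pow)
qed

lemma integrable_energy_power: "integrable (Rm_prod k) (\<lambda>Rs. energy k Rs ^ n)"
proof -
  interpret prob_space "Rm_prod k"
    by (rule prob_space_Rm_prod)
  show ?thesis
    using borel_measurable_energy energy_nonneg
    by (intro integrable_const_bound[where B = "(2 ^ k * mass ^ 2) ^ n"] AE_I2)
       (auto intro: power_mono energy_le)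
qed

lemma energy_squared_le:
  assumes "Rs \<in> space (Rm_prod k)"
  shows "energy k Rs ^ 2 \<le> mass * (\<Sum>T\<in>Pow {..<k}. measure lam (cell k T Rs) ^ 3)"
  using sum_squares_squared_le[of "Pow {..<k}" "\<lambda>T. measure lam (cell k T Rs)"]
    lam.sum_measure_cell[OF space_lam sets_Rm_prod_component[OF assms]]
  by (simp add: energy_def)

lemma borel_measurable_measure_split:
  assumes "A \<in> sets lam"
  shows "(\<lambda>R. measure lam (A \<inter> R)) \<in> borel_measurable Rm"
    and "(\<lambda>R. measure lam (A \<inter> - R)) \<in> borel_measurable Rm"
proof -
  have [measurable]: "A \<in> sets borel"
    using assms lam_borel by simp
  have [measurable]: "Measurable.pred (Rm \<Otimes>\<^sub>M borel) (\<lambda>p. snd p \<in> fst p)"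
    using pred_mem_Rm[OF measurable_ident_sets[OF refl]] by simp
  have "(\<lambda>R. measure lam {x. x \<in> A \<and> x \<in> R}) \<in> borel_measurable Rm"
    by (rule measurable_measure_lam) measurable
  moreover have "(\<lambda>R. measure lam {x. x \<in> A \<and> x \<notin> R}) \<in> borel_measurable Rm"
    by (rule measurable_measure_lam) measurable
  ultimately show "(\<lambda>R. measure lam (A \<inter> R)) \<in> borel_measurable Rm"
    and "(\<lambda>R. measure lam (A \<inter> - R)) \<in> borel_measurable Rm"
    by (simp_all add: Int_def Compl_eq)
qed

lemma integrable_measure_split:
  assumes "A \<in> sets lam"
  shows "integrable Rm (\<lambda>R. measure lam (A \<inter> R) * measure lam (A \<inter> - R))"
    and "integrable Rm (\<lambda>R. measure lam (A \<inter> R) ^ 2 + measure lam (A \<inter> - R) ^ 2)"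
proof -
  have le_mass: "measure lam B \<le> mass" for B
    by (rule lam.bounded_measure)
  have prod_le: "measure lam (A \<inter> R) * measure lam (A \<inter> - R) \<le> mass * mass" for R
    by (intro mult_mono le_mass) auto
  have square_le: "measure lam B ^ 2 \<le> mass ^ 2" for B
    by (intro power_mono le_mass) auto
  have squares_le: "measure lam (A \<inter> R) ^ 2 + measure lam (A \<inter> - R) ^ 2 \<le> 2 * mass ^ 2" for R
    using square_le[of "A \<inter> R"] square_le[of "A \<inter> - R"] by linarith
  note measurable = borel_measurable_measure_split[OF assms]
  show "integrable Rm (\<lambda>R. measure lam (A \<inter> R) * measure lam (A \<inter> - R))"
    by (rule Rm.integrable_const_bound[where B = "mass * mass"]) (use measurable prod_le in auto)
  show "integrable Rm (\<lambda>R. measure lam (A \<inter> R) ^ 2 + measure lam (A \<inter> - R) ^ 2)"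
    by (rule Rm.integrable_const_bound[where B = "2 * mass ^ 2"])
       (use measurable squares_le in auto)
qed

lemma integral_split_squares_le:
  assumes A: "A \<in> sets lam"
  shows "(\<integral>R. measure lam (A \<inter> R) ^ 2 + measure lam (A \<inter> - R) ^ 2 \<partial>Rm)
    \<le> measure lam A ^ 2 - measure lam A ^ 3 / \<alpha>"
proof -
  let ?a = "\<lambda>R. measure lam (A \<inter> R)" and ?b = "\<lambda>R. measure lam (A \<inter> - R)"
  have "?a R ^ 2 + ?b R ^ 2 = measure lam A ^ 2 - 2 * (?a R * ?b R)" if "R \<in> space Rm" for R
  proof -
    have sum: "?a R + ?b R = measure lam A"
      using lam.measure_Int_add_Diff[OF A sets_Rm[OF that]] by (simp add: Diff_eq)
    show ?thesis
      unfolding sum[symmetric] by (simp add: power2_eq_square algebra_simps)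
  qed
  then have "(\<integral>R. ?a R ^ 2 + ?b R ^ 2 \<partial>Rm) = (\<integral>R. measure lam A ^ 2 - 2 * (?a R * ?b R) \<partial>Rm)"
    by (intro Bochner_Integration.integral_cong) auto
  also have "\<dots> = measure lam A ^ 2 - 2 * (\<integral>R. ?a R * ?b R \<partial>Rm)"
    using integrable_measure_split(1)[OF A] by (simp add: Rm.prob_space)
  also have "\<dots> \<le> measure lam A ^ 2 - measure lam A ^ 3 / \<alpha>"
    using shatter A alpha_pos by (auto simp: shattering_def field_simps)
  finally show ?thesis .
qed

lemma energy_Suc_fun_upd:
  "energy (Suc k) (Rs(k := R)) =
    (\<Sum>T\<in>Pow {..<k}. measure lam (cell k T Rs \<inter> R) ^ 2 + measure lam (cell k T Rs \<inter> - R) ^ 2)"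
  by (simp add: energy_def sum_cell_Suc[where g = "\<lambda>C. measure lam C ^ 2"] cell_fun_upd)

lemma integrable_energy_Suc_fun_upd:
  assumes "Rs \<in> space (Rm_prod k)"
  shows "integrable Rm (\<lambda>R. energy (Suc k) (Rs(k := R)))"
  unfolding energy_Suc_fun_upd
  by (intro Bochner_Integration.integrable_sum integrable_measure_split sets_cell_Rm_prod[OF assms])

lemma integral_energy_Suc_le:
  assumes Rs: "Rs \<in> space (Rm_prod k)"
  shows "(\<integral>R. energy (Suc k) (Rs(k := R)) \<partial>Rm) \<le> energy k Rs - energy k Rs ^ 2 / (\<alpha> * mass)"
proof -
  let ?a = "\<lambda>T. measure lam (cell k T Rs)"
  have "(\<integral>R. energy (Suc k) (Rs(k := R)) \<partial>Rm) =
      (\<Sum>T\<in>Pow {..<k}.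
        \<integral>R. measure lam (cell k T Rs \<inter> R) ^ 2 + measure lam (cell k T Rs \<inter> - R) ^ 2 \<partial>Rm)"
    unfolding energy_Suc_fun_upd
    by (intro Bochner_Integration.integral_sum integrable_measure_split sets_cell_Rm_prod[OF Rs])
  also have "\<dots> \<le> (\<Sum>T\<in>Pow {..<k}. ?a T ^ 2 - ?a T ^ 3 / \<alpha>)"
    by (intro sum_mono integral_split_squares_le sets_cell_Rm_prod[OF Rs])
  also have "\<dots> = energy k Rs - (\<Sum>T\<in>Pow {..<k}. ?a T ^ 3) / \<alpha>"
    by (simp add: energy_def sum_subtractf sum_divide_distrib)
  also have "\<dots> \<le> energy k Rs - energy k Rs ^ 2 / (\<alpha> * mass)"
  proof -
    have "energy k Rs ^ 2 / (\<alpha> * mass) \<le> mass * (\<Sum>T\<in>Pow {..<k}. ?a T ^ 3) / (\<alpha> * mass)"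
      using energy_squared_le[OF Rs] alpha_pos by (intro divide_right_mono) auto
    also have "\<dots> \<le> (\<Sum>T\<in>Pow {..<k}. ?a T ^ 3) / \<alpha>"
      using alpha_pos by (cases "mass = 0") (auto intro!: divide_nonneg_pos sum_nonneg)
    finally show ?thesis
      by linarith
  qed
  finally show ?thesis .
qed

definition expected_energy :: "nat \<Rightarrow> real" where
  "expected_energy k = (\<integral>Rs. energy k Rs \<partial>Rm_prod k)"

lemma nn_integral_energy: "(\<integral>\<^sup>+Rs. ennreal (energy k Rs) \<partial>Rm_prod k) = ennreal (expected_energy k)"
  unfolding expected_energy_def using integrable_energy_power[of k 1]
  by (intro nn_integral_eq_integral AE_I2) (auto simp: energy_nonneg)

lemma expected_energy_0: "expected_energy 0 = mass ^ 2"
proof -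
  interpret prob_space "Rm_prod 0"
    by (rule prob_space_Rm_prod)
  show ?thesis
    using prob_space by (simp add: expected_energy_def energy_def cell_def space_lam)
qed

lemma expected_energy_nonneg: "0 \<le> expected_energy k"
  unfolding expected_energy_def by (intro integral_nonneg_AE AE_I2 energy_nonneg)

lemma expected_energy_squared_le: "expected_energy k ^ 2 \<le> (\<integral>Rs. energy k Rs ^ 2 \<partial>Rm_prod k)"
proof -
  interpret prob_space "Rm_prod k"
    by (rule prob_space_Rm_prod)
  have "variance (energy k) = (\<integral>Rs. energy k Rs ^ 2 \<partial>Rm_prod k) - expected_energy k ^ 2"
    unfolding expected_energy_def
    using integrable_energy_power[of k 1] integrable_energy_power[of k 2]
    by (intro variance_eq) auto
  with variance_positive[of "energy k"] show ?thesis
    by linarith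
qed

lemma expected_energy_Suc_le_integral:
  "expected_energy (Suc k) \<le> (\<integral>Rs. energy k Rs - energy k Rs ^ 2 / (\<alpha> * mass) \<partial>Rm_prod k)"
proof -
  interpret product_sigma_finite "\<lambda>_::nat. Rm"
    by (simp add: product_sigma_finite_def Rm.sigma_finite_measure_axioms)
  define H where "H Rs = energy k Rs - energy k Rs ^ 2 / (\<alpha> * mass)" for Rs
  have inner_le: "(\<integral>R. energy (Suc k) (Rs(k := R)) \<partial>Rm) \<le> H Rs" if "Rs \<in> space (Rm_prod k)" for Rs
    unfolding H_def using that by (rule integral_energy_Suc_le)
  have H_nonneg: "0 \<le> H Rs" if "Rs \<in> space (Rm_prod k)" for Rs
  proof -
    have "0 \<le> (\<integral>R. energy (Suc k) (Rs(k := R)) \<partial>Rm)"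
      by (intro integral_nonneg_AE AE_I2 energy_nonneg)
    with inner_le[OF that] show ?thesis
      by linarith
  qed
  have H_integrable: "integrable (Rm_prod k) H"
    unfolding H_def using integrable_energy_power[of k 1] integrable_energy_power[of k 2] by simp
  have "ennreal (expected_energy (Suc k)) =
      (\<integral>\<^sup>+Rs. ennreal (energy (Suc k) Rs) \<partial>(\<Pi>\<^sub>M j\<in>insert k {..<k}. Rm))"
    using nn_integral_energy[of "Suc k"] by (simp add: lessThan_Suc)
  also have "\<dots> = (\<integral>\<^sup>+Rs. \<integral>\<^sup>+R. ennreal (energy (Suc k) (Rs(k := R))) \<partial>Rm \<partial>Rm_prod k)"
    using borel_measurable_energy[of "Suc k"]
    by (intro product_nn_integral_insert) (auto simp: lessThan_Suc)
  also have "\<dots> = (\<integral>\<^sup>+Rs. ennreal (\<integral>R. energy (Suc k) (Rs(k := R)) \<partial>Rm) \<partial>Rm_prod k)"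
    by (intro nn_integral_cong nn_integral_eq_integral integrable_energy_Suc_fun_upd AE_I2
        energy_nonneg)
  also have "\<dots> \<le> (\<integral>\<^sup>+Rs. ennreal (H Rs) \<partial>Rm_prod k)"
    by (intro nn_integral_mono ennreal_leI inner_le)
  also have "\<dots> = ennreal (\<integral>Rs. H Rs \<partial>Rm_prod k)"
    using H_nonneg by (intro nn_integral_eq_integral H_integrable AE_I2)
  finally show ?thesis
    using H_nonneg by (simp add: H_def integral_nonneg_AE ennreal_le_iff)
qed

lemma expected_energy_Suc_le:
  "expected_energy (Suc k) \<le> expected_energy k - expected_energy k ^ 2 / (\<alpha> * mass)"
proof -
  have "expected_energy (Suc k) \<le> (\<integral>Rs. energy k Rs - energy k Rs ^ 2 / (\<alpha> * mass) \<partial>Rm_prod k)"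
    by (rule expected_energy_Suc_le_integral)
  also have "\<dots> = expected_energy k - (\<integral>Rs. energy k Rs ^ 2 \<partial>Rm_prod k) / (\<alpha> * mass)"
    unfolding expected_energy_def
    using integrable_energy_power[of k 1] integrable_energy_power[of k 2] by simp
  also have "\<dots> \<le> expected_energy k - expected_energy k ^ 2 / (\<alpha> * mass)"
    using expected_energy_squared_le alpha_pos by (simp add: divide_right_mono)
  finally show ?thesis .
qed

lemma expected_energy_le: "expected_energy k \<le> max (mass ^ 2) (2 * \<alpha> * mass) / (real k + 1)"
proof (cases "mass = 0")
  case True
  have "expected_energy k \<le> 0"
  proof (induction k)
    case 0
    then show ?case by (simp add: expected_energy_0 True)
  next
    case (Suc k)
    then show ?case using expected_energy_Suc_le[of k] True by simp
  qed
  then show ?thesis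
    using True by simp
next
  case False
  then have "0 < mass"
    using measure_nonneg[of lam "space lam"] by linarith
  then show ?thesis
    using alpha_pos expected_energy_nonneg expected_energy_Suc_le
    by (intro quadratic_recursion_bound[where b = "\<alpha> * mass"]) (auto simp: expected_energy_0)
qed

end

theorem lemma7p1:
  fixes lam :: "'a::polish_space measure"
    and Rm :: "'a set measure"
    and \<alpha> :: real and k :: nat
  assumes lam_borel: "sets lam = sets borel"
    and lam_fin: "finite_measure lam"
    and Rm_prob: "prob_space Rm"
    and Rm_borel: "\<forall>S\<in>space Rm. S \<in> sets borel"
    and Rm_joint: "{(S, x). x \<in> S} \<inter> (space Rm \<times> UNIV) \<in> sets (Rm \<Otimes>\<^sub>M borel)"
    and compl_meas: "(\<lambda>S. - S) \<in> Rm \<rightarrow>\<^sub>M Rm"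
    and symmetric: "distr Rm Rm (\<lambda>S. - S) = Rm"
    and shatter: "shattering Rm lam \<alpha>"
    and k: "k \<ge> 1"
  shows "(\<integral>\<^sup>+Rs. ennreal (part_norm lam 2 (refine_partition k Rs))
            \<partial>(\<Pi>\<^sub>M j\<in>{..<k}. Rm))
         \<le> ennreal (max ((measure lam (space lam))\<^sup>2) (2 * \<alpha> * measure lam (space lam))
                    / (real k + 1))"
proof -
  interpret shattering_recombination lam Rm \<alpha>
    using lam_borel lam_fin Rm_prob Rm_borel Rm_joint shatter
    by (rule shattering_recombination.intro)
  have "(\<integral>\<^sup>+Rs. ennreal (part_norm lam 2 (refine_partition k Rs)) \<partial>Rm_prod k) =
      (\<integral>\<^sup>+Rs. ennreal (energy k Rs) \<partial>Rm_prod k)"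
    by (simp add: part_norm_refine_partition energy_def)
  also have "\<dots> = ennreal (expected_energy k)"
    by (rule nn_integral_energy)
  also have "\<dots> \<le> ennreal (max (mass ^ 2) (2 * \<alpha> * mass) / (real k + 1))"
    by (intro ennreal_leI expected_energy_le)
  finally show ?thesis .
qed

end
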